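(* Let $H$ be a digraph (possibly with loops) and let $D$ be an $H$-colored quasi-transitive digraph. If $k \geq 4$, then $D$ has a $(k,H)$-kernel.
   Context: All digraphs are finite. A digraph $D$ is quasi-transitive if for all distinct $u,v\in V(D)$, whenever there is a directed $uv$-path of length $2$, $u$ and $v$ are joined by an arc (in some direction). $D$ has no loops and comes with a map $\rho: A(D)\to V(H)$. For a walk $W=(x_0,\ldots,x_n)$ in $D$, there is an obstruction on $x_i$ if $(\rho(x_{i-1},x_i),\rho(x_i,x_{i+1})) \notin A(H)$; for an open walk this is considered at internal vertices $x_i$, $1\le i\le n-1$, for a closed walk at all $i\in\{0,\ldots,n-1\}$ with indices modulo $n$. $O_H(W)$ is the set of indices with an obstruction; the $H$-length is $l_H(W)=|O_H(W)|+1$ for open $W$ and $|O_H(W)|$ for closed $W$. A $(k,H)$-kernel ($k\ge2$) is a set $S\subseteq V(D)$ such that for every two distinct $u,v\in S$ every directed $uv$-path in $D$ has $H$-length at least $k$, and for every $x\in V(D)\setminus S$ there is a directed path from $x$ to a vertex of $S$ of $H$-length at most $k-1$. *)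

theory Defs
  imports Main
begin

text \<open>The colouring is rho :: 'a \<times> 'a \<Rightarrow> 'c, only its values on A matter.\<close>

definition quasi_transitive :: "'a set \<Rightarrow> ('a \<times> 'a) set \<Rightarrow> bool" where
  "quasi_transitive V A \<longleftrightarrow>
     (\<forall>u\<in>V. \<forall>v\<in>V. \<forall>w\<in>V. u \<noteq> w \<and> (u, v) \<in> A \<and> (v, w) \<in> A \<longrightarrow> (u, w) \<in> A \<or> (w, u) \<in> A)"

definition is_path :: "('a \<times> 'a) set \<Rightarrow> 'a list \<Rightarrow> 'a \<Rightarrow> 'a \<Rightarrow> bool" where
  "is_path A xs u v \<longleftrightarrow> xs \<noteq> [] \<and> distinct xs \<and> hd xs = u \<and> last xs = v \<and>
     (\<forall>i. Suc i < length xs \<longrightarrow> (xs ! i, xs ! Suc i) \<in> A)"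

definition obstructions :: "('c \<times> 'c) set \<Rightarrow> ('a \<times> 'a \<Rightarrow> 'c) \<Rightarrow> 'a list \<Rightarrow> nat set" where
  "obstructions AH \<rho> xs =
     {i. 1 \<le> i \<and> Suc i < length xs \<and> (\<rho> (xs ! (i - 1), xs ! i), \<rho> (xs ! i, xs ! Suc i)) \<notin> AH}"

definition H_length :: "('c \<times> 'c) set \<Rightarrow> ('a \<times> 'a \<Rightarrow> 'c) \<Rightarrow> 'a list \<Rightarrow> nat" where
  "H_length AH \<rho> xs = card (obstructions AH \<rho> xs) + 1"

definition kH_kernel :: "'a set \<Rightarrow> ('a \<times> 'a) set \<Rightarrow> ('c \<times> 'c) set \<Rightarrow> ('a \<times> 'a \<Rightarrow> 'c) \<Rightarrow> nat \<Rightarrow> 'a set \<Rightarrow> bool" where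
  "kH_kernel V A AH \<rho> k S \<longleftrightarrow> S \<subseteq> V \<and>
     (\<forall>u\<in>S. \<forall>v\<in>S. u \<noteq> v \<longrightarrow> (\<forall>xs. is_path A xs u v \<longrightarrow> H_length AH \<rho> xs \<ge> k)) \<and>
     (\<forall>x\<in>V - S. \<exists>v\<in>S. \<exists>xs. is_path A xs x v \<and> H_length AH \<rho> xs \<le> k - 1)"

end

theory Submission
  imports Defs
begin

(* Call u \<rightarrow> v an arc of the (k,H)-closure if some uv-path has H-length at most k - 1; the
   (k,H)-kernels of D are then exactly the kernels of its closure. The closure contains every
   path with at most k - 1 arcs, whatever the colouring, and nothing more is needed about H.

   A kernel exists as soon as every strongly connected set of vertices has a sink in the
   closure: take an initial strong component, a kernel of the remaining vertices, and add a
   sink of the part of the component that this kernel does not absorb.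

   In a quasi-transitive digraph, if the shortest uv-path has length at least 4 then v \<rightarrow> u
   (Bang-Jensen and Huang). So if a strong set Q had no sink, choosing for each vertex of Q a
   vertex of Q not absorbed into it yields an infinite walk in Q that never returns by at most
   two arcs; quasi-transitivity makes such a walk transitive, hence injective, contradicting
   the finiteness of Q. *)

definition is_kernel :: "('a \<Rightarrow> 'a \<Rightarrow> bool) \<Rightarrow> 'a set \<Rightarrow> 'a set \<Rightarrow> bool" where
  "is_kernel R W S \<longleftrightarrow> S \<subseteq> W \<and>
     (\<forall>u\<in>S. \<forall>v\<in>S. u \<noteq> v \<longrightarrow> \<not> R u v) \<and> (\<forall>x\<in>W - S. \<exists>v\<in>S. R x v)"

lemma obtain_initial_strong_component:
  assumes "finite W" and "W \<noteq> {}"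
  obtains Q where "Q \<subseteq> W" and "Q \<noteq> {}"
    and "\<forall>x\<in>Q. \<forall>y\<in>Q. (x, y) \<in> P\<^sup>*"
    and "\<forall>y\<in>W. \<forall>z\<in>Q. (y, z) \<in> P\<^sup>* \<longrightarrow> y \<in> Q"
proof -
  define ancestors where "ancestors x = {y\<in>W. (y, x) \<in> P\<^sup>*}" for x
  have finite_ancestors: "finite (ancestors x)" for x
    using assms(1) unfolding ancestors_def by simp
  obtain x0 where "x0 \<in> W" and x0_min: "\<And>x. x \<in> W \<Longrightarrow> card (ancestors x0) \<le> card (ancestors x)"
    using ex_has_least_nat[of "\<lambda>x. x \<in> W" _ "\<lambda>x. card (ancestors x)"] assms(2) by blast
  have "(x0, y) \<in> P\<^sup>*" if "y \<in> ancestors x0" for y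
  proof -
    have "ancestors y \<subseteq> ancestors x0"
      using that unfolding ancestors_def by (auto intro: rtrancl_trans)
    moreover have "card (ancestors x0) \<le> card (ancestors y)"
      using that x0_min unfolding ancestors_def by simp
    ultimately have "ancestors y = ancestors x0"
      by (simp add: card_seteq finite_ancestors)
    then show ?thesis using \<open>x0 \<in> W\<close> unfolding ancestors_def by auto
  qed
  moreover have "x0 \<in> ancestors x0"
    using \<open>x0 \<in> W\<close> unfolding ancestors_def by simp
  ultimately show ?thesis
    by (intro that[of "ancestors x0"]) (auto simp: ancestors_def intro: rtrancl_trans)
qed

lemma kernel_exists_if_strong_sets_have_sinks:
  assumes "finite W"
    and reach: "\<And>u v. R u v \<Longrightarrow> (u, v) \<in> P\<^sup>*"
    and "\<And>Q. Q \<subseteq> W \<Longrightarrow> Q \<noteq> {} \<Longrightarrow> \<forall>x\<in>Q. \<forall>y\<in>Q. (x, y) \<in> P\<^sup>* \<Longrightarrow>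
                  \<exists>v\<in>Q. \<forall>u\<in>Q. u \<noteq> v \<longrightarrow> R u v"
  shows "\<exists>S. is_kernel R W S"
  using assms(1,3)
proof (induction W rule: finite_psubset_induct)
  case (psubset W)
  show ?case
  proof (cases "W = {}")
    case True
    then have "is_kernel R W {}" by (simp add: is_kernel_def)
    then show ?thesis ..
  next
    case False
    obtain Q where Q: "Q \<subseteq> W" "Q \<noteq> {}" "\<forall>x\<in>Q. \<forall>y\<in>Q. (x, y) \<in> P\<^sup>*"
      and Q_closed: "\<forall>y\<in>W. \<forall>z\<in>Q. (y, z) \<in> P\<^sup>* \<longrightarrow> y \<in> Q"
      using obtain_initial_strong_component[OF psubset.hyps False] by metis
    have "W - Q \<subset> W" using Q(1,2) by blast
    then obtain S' where S': "is_kernel R (W - Q) S'"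
      using psubset.IH psubset.prems by (metis Diff_subset subset_trans)
    have S'_sub: "S' \<subseteq> W - Q" and S'_indep: "\<forall>u\<in>S'. \<forall>v\<in>S'. u \<noteq> v \<longrightarrow> \<not> R u v"
      and S'_absorb: "\<forall>x\<in>(W - Q) - S'. \<exists>s\<in>S'. R x s"
      using S' unfolding is_kernel_def by auto
    define Q' where "Q' = {x\<in>Q. \<not> (\<exists>s\<in>S'. R x s)}"
    have absorbed_off_Q': "\<exists>s\<in>S'. R x s" if "x \<in> W - S'" "x \<notin> Q'" for x
      using that S'_absorb unfolding Q'_def by blast
    show ?thesis
    proof (cases "Q' = {}")
      case True
      then have "is_kernel R W S'"
        using S'_sub S'_indep absorbed_off_Q' unfolding is_kernel_def by blast
      then show ?thesis ..
    next
      case False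
      obtain v where v: "v \<in> Q'" "\<forall>u\<in>Q'. u \<noteq> v \<longrightarrow> R u v"
        using psubset.prems[of Q'] Q False unfolding Q'_def by blast
      have "\<not> R u v" if "u \<in> S'" for u
        using reach[of u v] Q_closed v(1) that S'_sub unfolding Q'_def by blast
      then have "is_kernel R W (insert v S')"
        using S'_sub S'_indep absorbed_off_Q' v Q(1) unfolding is_kernel_def Q'_def by blast
      then show ?thesis ..
    qed
  qed
qed

definition kH_closure :: "('a \<times> 'a) set \<Rightarrow> ('c \<times> 'c) set \<Rightarrow> ('a \<times> 'a \<Rightarrow> 'c) \<Rightarrow> nat \<Rightarrow> 'a \<Rightarrow> 'a \<Rightarrow> bool" where
  "kH_closure A AH \<rho> k u v \<longleftrightarrow> (\<exists>xs. is_path A xs u v \<and> H_length AH \<rho> xs \<le> k - 1)"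

lemma kH_kernel_iff_is_kernel_kH_closure:
  "kH_kernel V A AH \<rho> k S \<longleftrightarrow> is_kernel (kH_closure A AH \<rho> k) V S"
proof -
  have "k \<le> H_length AH \<rho> xs \<longleftrightarrow> \<not> H_length AH \<rho> xs \<le> k - 1" for xs
    unfolding H_length_def by linarith
  then show ?thesis
    unfolding kH_kernel_def is_kernel_def kH_closure_def by simp
qed

lemma H_length_le_arcs:
  assumes "2 \<le> length xs"
  shows "H_length AH \<rho> xs \<le> length xs - 1"
proof -
  have "obstructions AH \<rho> xs \<subseteq> {1..<length xs - 1}"
    by (auto simp: obstructions_def)
  then have "card (obstructions AH \<rho> xs) \<le> length xs - 2"
    by (metis card_atLeastLessThan card_mono diff_diff_left finite_atLeastLessThan one_add_one)
  then show ?thesis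
    using assms by (simp add: H_length_def)
qed

lemma is_path_imp_rtrancl:
  assumes "is_path A xs u v"
  shows "(u, v) \<in> A\<^sup>*"
proof -
  have "(xs ! 0, xs ! (length xs - 1)) \<in> A ^^ (length xs - 1)"
    using assms unfolding is_path_def relpow_fun_conv by (intro exI[of _ "(!) xs"]) simp
  then show ?thesis
    using assms unfolding is_path_def by (metis hd_conv_nth last_conv_nth relpow_imp_rtrancl)
qed

lemma kH_closure_imp_rtrancl: "kH_closure A AH \<rho> k u v \<Longrightarrow> (u, v) \<in> A\<^sup>*"
  unfolding kH_closure_def using is_path_imp_rtrancl by metis

lemma walk_segment_relpow:
  assumes "\<forall>t<m. (f t, f (Suc t)) \<in> A" and "i \<le> j" and "j \<le> m"
  shows "(f i, f j) \<in> A ^^ (j - i)"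
  unfolding relpow_fun_conv
  using assms by (intro exI[of _ "\<lambda>t. f (i + t)"]) simp

definition shortest_walk :: "('a \<times> 'a) set \<Rightarrow> (nat \<Rightarrow> 'a) \<Rightarrow> nat \<Rightarrow> bool" where
  "shortest_walk A f m \<longleftrightarrow> (\<forall>t<m. (f t, f (Suc t)) \<in> A) \<and> (\<forall>l<m. (f 0, f m) \<notin> A ^^ l)"

lemma obtain_shortest_walk:
  assumes "(u, v) \<in> A ^^ n"
  obtains f m where "m \<le> n" and "f 0 = u" and "f m = v" and "shortest_walk A f m"
proof -
  define m where "m = (LEAST m. (u, v) \<in> A ^^ m)"
  have "(u, v) \<in> A ^^ m" and "m \<le> n" and "\<forall>l<m. (u, v) \<notin> A ^^ l"
    unfolding m_def using assms by (auto intro: LeastI Least_le dest: not_less_Least)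
  then show ?thesis
    using that unfolding shortest_walk_def relpow_fun_conv by metis
qed

lemma shortest_walk_no_shortcut:
  assumes "shortest_walk A f m" and "i \<le> j" and "j \<le> m" and "l < j - i"
  shows "(f i, f j) \<notin> A ^^ l"
proof
  assume shortcut: "(f i, f j) \<in> A ^^ l"
  have walk: "\<forall>t<m. (f t, f (Suc t)) \<in> A"
    using assms(1) unfolding shortest_walk_def by simp
  have "(f 0, f i) \<in> A ^^ (i - 0)"
    using walk assms(2,3) by (intro walk_segment_relpow) auto
  moreover note shortcut
  moreover have "(f j, f m) \<in> A ^^ (m - j)"
    using walk assms(3) by (intro walk_segment_relpow) auto
  ultimately have "(f 0, f m) \<in> A ^^ (i + l + (m - j))"
    by (auto simp: relpow_add)
  moreover have "i + l + (m - j) < m"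
    using assms(2-4) by linarith
  ultimately show False
    using assms(1) unfolding shortest_walk_def by blast
qed

lemma shortest_walk_inj:
  assumes "shortest_walk A f m" and "i < j" and "j \<le> m"
  shows "f i \<noteq> f j"
  using shortest_walk_no_shortcut[OF assms(1) less_imp_le assms(3), of i 0] assms(2) by auto

lemma shortest_walk_no_chord:
  assumes "shortest_walk A f m" and "i + 2 \<le> j" and "j \<le> m"
  shows "(f i, f j) \<notin> A"
  using shortest_walk_no_shortcut[OF assms(1) _ assms(3), of i 1] assms(2) by simp

lemma kH_closure_if_relpow:
  assumes "(u, v) \<in> A ^^ n" and "u \<noteq> v" and "n < k"
  shows "kH_closure A AH \<rho> k u v"
proof -
  obtain f m where "m \<le> n" "f 0 = u" "f m = v" and f: "shortest_walk A f m"
    using assms(1) by (rule obtain_shortest_walk)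
  define xs where "xs = map f [0..<Suc m]"
  have "m \<noteq> 0"
    using \<open>f 0 = u\<close> \<open>f m = v\<close> assms(2) by metis
  have "distinct xs"
    unfolding xs_def distinct_map
  proof
    show "inj_on f (set [0..<Suc m])"
      using shortest_walk_inj[OF f] by (intro inj_onI) (metis atLeastLessThan_iff less_Suc_eq_le linorder_neqE_nat set_upt)
  qed simp
  moreover have len: "length xs = Suc m" and nth: "\<And>i. i < Suc m \<Longrightarrow> xs ! i = f i"
    by (simp_all add: xs_def del: upt_Suc)
  moreover have "xs \<noteq> []"
    using len by auto
  ultimately have "is_path A xs u v"
    using f \<open>f 0 = u\<close> \<open>f m = v\<close> unfolding is_path_def shortest_walk_def
    by (simp add: hd_conv_nth last_conv_nth)
  moreover have "H_length AH \<rho> xs \<le> k - 1"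
    using H_length_le_arcs[of xs AH \<rho>] \<open>m \<noteq> 0\<close> \<open>m \<le> n\<close> assms(3) by (simp add: xs_def)
  ultimately show ?thesis
    unfolding kH_closure_def by blast
qed

locale quasi_transitive_digraph =
  fixes V :: "'a set" and A :: "('a \<times> 'a) set"
  assumes arcs_in_vertices: "A \<subseteq> V \<times> V"
    and quasi_transitive: "quasi_transitive V A"
    and loopless: "(x, x) \<notin> A"
begin

lemma arc_or_reverse_if_two_path:
  assumes "(a, b) \<in> A" and "(b, c) \<in> A" and "a \<noteq> c"
  shows "(a, c) \<in> A \<or> (c, a) \<in> A"
  using assms quasi_transitive arcs_in_vertices unfolding quasi_transitive_def by blast

lemma shortest_walk_end_dominates_start:
  assumes f: "shortest_walk A f m" and "4 \<le> m"
  shows "(f m, f 0) \<in> A"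
proof -
  have walk: "(f t, f (Suc t)) \<in> A" if "t < m" for t
    using f that unfolding shortest_walk_def by blast
  \<comment> \<open>Quasi-transitivity joins the ends of a 2-path; minimality of the walk rules out the forward arc.\<close>
  have back_arc: "(f j, f i) \<in> A"
    if "i + 2 \<le> j" "j \<le> m" "(f j, y) \<in> A \<and> (y, f i) \<in> A \<or> (f i, y) \<in> A \<and> (y, f j) \<in> A"
    for i j y
    using that arc_or_reverse_if_two_path shortest_walk_no_chord[OF f that(1,2)]
      shortest_walk_inj[OF f, of i j] by fastforce
  have skip: "(f (i + 2), f i) \<in> A" if "i + 2 \<le> m" for i
    using back_arc[of i "i + 2" "f (Suc i)"] walk[of i] walk[of "Suc i"] that by simp
  \<comment> \<open>The only use of m \<ge> 4: the arc f 3 \<rightarrow> f 0 is obtained through f 4.\<close>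
  have f4: "(f 4, f 0) \<in> A"
    using back_arc[of 0 4 "f 2"] skip[of 0] skip[of 2] \<open>4 \<le> m\<close> by (simp add: eval_nat_numeral)
  have "(f j, f 0) \<in> A" if "2 \<le> j" "j \<le> m" for j
    using that
  proof (induction j rule: less_induct)
    case (less j)
    consider "j = 2" | "j = 3" | "4 \<le> j"
      using less.prems by linarith
    then show ?case
    proof cases
      case 1
      then show ?thesis using skip[of 0] less.prems by (simp add: eval_nat_numeral)
    next
      case 2
      then show ?thesis using back_arc[of 0 3 "f 4"] walk[of 3] f4 \<open>4 \<le> m\<close> by simp
    next
      case 3
      define i where "i = j - 2"
      have "j = i + 2" and "2 \<le> i"
        using 3 by (simp_all add: i_def)
      then show ?thesis
        using back_arc[of 0 j "f i"] skip[of i] less.IH[of i] less.prems by simp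
    qed
  qed
  then show ?thesis
    using \<open>4 \<le> m\<close> by simp
qed

lemma back_arc_if_not_kH_closure:
  assumes "(u, v) \<in> A\<^sup>*" and "u \<noteq> v" and "\<not> kH_closure A AH \<rho> k u v" and "4 \<le> k"
  shows "(v, u) \<in> A"
proof -
  obtain n where "(u, v) \<in> A ^^ n"
    using assms(1) rtrancl_power by blast
  then obtain f m where "f 0 = u" "f m = v" and f: "shortest_walk A f m"
    by (rule obtain_shortest_walk)
  have "(u, v) \<in> A ^^ m"
    using walk_segment_relpow[of m f A 0 m] f \<open>f 0 = u\<close> \<open>f m = v\<close>
    unfolding shortest_walk_def by simp
  then have "k \<le> m"
    using kH_closure_if_relpow assms(2,3) by (metis not_le)
  then show ?thesis
    using shortest_walk_end_dominates_start[OF f] assms(4) \<open>f 0 = u\<close> \<open>f m = v\<close> by simp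
qed

lemma arc_if_less_in_chain:
  assumes forward: "\<And>n. (s n, s (Suc n)) \<in> A"
    and no_return: "\<And>n. (s (Suc n), s n) \<notin> A" "\<And>n. (s (Suc n), s n) \<notin> A O A"
    and "i < j"
  shows "(s i, s j) \<in> A"
proof -
  have "(s i, s (i + Suc d)) \<in> A" for d i
  proof (induction d arbitrary: i)
    case 0
    then show ?case using forward by simp
  next
    case (Suc d)
    define j where "j = i + Suc (Suc d)"
    have to_j: "(s (Suc i), s j) \<in> A"
      using Suc.IH[of "Suc i"] by (simp add: j_def)
    then have "s i \<noteq> s j"
      using no_return(1)[of i] by auto
    then have "(s i, s j) \<in> A \<or> (s j, s i) \<in> A"
      using arc_or_reverse_if_two_path[OF Suc.IH[of i] forward[of "i + Suc d"]] by (simp add: j_def)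
    moreover have "(s j, s i) \<notin> A"
      using to_j no_return(2)[of i] by blast
    ultimately show ?case by (simp add: j_def)
  qed
  then show ?thesis
    using \<open>i < j\<close> by (metis add_Suc_right less_imp_Suc_add)
qed

lemma kH_closure_sink:
  assumes "finite Q" and "Q \<noteq> {}" and strong: "\<forall>x\<in>Q. \<forall>y\<in>Q. (x, y) \<in> A\<^sup>*" and "4 \<le> k"
  shows "\<exists>v\<in>Q. \<forall>u\<in>Q. u \<noteq> v \<longrightarrow> kH_closure A AH \<rho> k u v"
proof (rule ccontr)
  assume "\<not> ?thesis"
  then obtain g where g: "\<And>v. v \<in> Q \<Longrightarrow> g v \<in> Q \<and> g v \<noteq> v \<and> \<not> kH_closure A AH \<rho> k (g v) v"
    by metis
  obtain v0 where "v0 \<in> Q"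
    using assms(2) by blast
  define s where "s n = (g ^^ n) v0" for n
  have s_in_Q: "s n \<in> Q" for n
    by (induction n) (auto simp: s_def \<open>v0 \<in> Q\<close> g)
  have s_Suc: "s (Suc n) = g (s n)" for n
    by (simp add: s_def)
  have not_closure: "\<not> kH_closure A AH \<rho> k (s (Suc n)) (s n)" and s_moves: "s (Suc n) \<noteq> s n" for n
    using g s_in_Q s_Suc by auto
  have forward: "(s n, s (Suc n)) \<in> A" for n
    using back_arc_if_not_kH_closure[OF _ s_moves not_closure \<open>4 \<le> k\<close>] strong s_in_Q by blast
  have no_short_return: "(s (Suc n), s n) \<notin> A ^^ l" if "l < k" for n l
    using kH_closure_if_relpow[OF _ s_moves that] not_closure by blast
  have "(s (Suc n), s n) \<notin> A" and "(s (Suc n), s n) \<notin> A O A" for n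
    using no_short_return[of 1 n] no_short_return[of 2 n] \<open>4 \<le> k\<close> by (simp_all add: numeral_2_eq_2)
  then have "(s i, s j) \<in> A" if "i < j" for i j
    using arc_if_less_in_chain[of s, OF forward] that by blast
  then have "inj s"
    using loopless by (metis injI linorder_neqE_nat)
  then show False
    using \<open>finite Q\<close> s_in_Q by (meson finite_imageD finite_subset image_subsetI infinite_UNIV_nat)
qed

end

theorem theorem16:
  fixes V :: "'a set" and A :: "('a \<times> 'a) set"
    and VH :: "'c set" and AH :: "('c \<times> 'c) set"
    and \<rho> :: "'a \<times> 'a \<Rightarrow> 'c" and k :: nat
  assumes "finite V" and "A \<subseteq> V \<times> V" and "\<forall>x. (x, x) \<notin> A"
    and "finite VH" and "AH \<subseteq> VH \<times> VH"
    and "\<forall>e\<in>A. \<rho> e \<in> VH"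
    and "quasi_transitive V A"
    and "k \<ge> 4"
  shows "\<exists>S. kH_kernel V A AH \<rho> k S"
proof -
  interpret quasi_transitive_digraph V A
    using assms(2,3,7) by unfold_locales auto
  have "\<exists>S. is_kernel (kH_closure A AH \<rho> k) V S"
  proof (rule kernel_exists_if_strong_sets_have_sinks)
    show "finite V" by fact
    show "(u, v) \<in> A\<^sup>*" if "kH_closure A AH \<rho> k u v" for u v
      using that by (rule kH_closure_imp_rtrancl)
    show "\<exists>v\<in>Q. \<forall>u\<in>Q. u \<noteq> v \<longrightarrow> kH_closure A AH \<rho> k u v"
      if "Q \<subseteq> V" "Q \<noteq> {}" "\<forall>x\<in>Q. \<forall>y\<in>Q. (x, y) \<in> A\<^sup>*" for Q
      using kH_closure_sink[of Q k] that \<open>finite V\<close> \<open>k \<ge> 4\<close> finite_subset by blast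
  qed
  then show ?thesis
    by (simp add: kH_kernel_iff_is_kernel_kH_closure)
qed

end
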